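(* For the operator $A\colon c_c\to c_c$, $(Ax)_1=x_1$, $(Ax)_n=x_n-x_{n-1}$ ($n>1$), with adjoint $A^*\colon\ell^2\to\ell^2$, we have $$\partial(f\circ A)(0)=\{0\}\neq\emptyset=A^*\,\partial f(A0).$$
   Context: Let $c_c$ be the space of finitely supported real sequences with the $\ell^2$-norm; its dual is identified with $\ell^2$ via $\langle z,y\rangle=\sum_n z_ny_n$. Let $f\colon c_c\to\mathbb{R}$, $f(x)=\sum_{n=1}^\infty \frac{n^2}{2}(x_n-n^{-2})^2$. For convex $h\colon c_c\to(-\infty,\infty]$ and $x$ with $h(x)<\infty$, $\partial h(x)=\{z\in\ell^2:\forall y\in c_c:\ h(y)\ge h(x)+\langle z,y-x\rangle\}$. The adjoint $A^*\colon\ell^2\to\ell^2$ is defined by $\langle A^*z,x\rangle=\langle z,Ax\rangle$ for all $z\in\ell^2$, $x\in c_c$. *)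

theory Defs
  imports "HOL-Analysis.Analysis" "HOL-Library.Function_Algebras"
begin

(* Sequences are 0-indexed: the paper's coordinate x_n (n >= 1) is  x (n - 1). *)

definition cc :: "(nat \<Rightarrow> real) set" where
  "cc = {x. finite {n. x n \<noteq> 0}}"

definition l2 :: "(nat \<Rightarrow> real) set" where
  "l2 = {z. summable (\<lambda>n. (z n)\<^sup>2)}"

definition pair :: "(nat \<Rightarrow> real) \<Rightarrow> (nat \<Rightarrow> real) \<Rightarrow> real" where
  "pair z y = (\<Sum>n. z n * y n)"

definition subdiff :: "((nat \<Rightarrow> real) \<Rightarrow> real) \<Rightarrow> (nat \<Rightarrow> real) \<Rightarrow> (nat \<Rightarrow> real) set" where
  "subdiff h x = {z \<in> l2. \<forall>y \<in> cc. h y \<ge> h x + pair z (y - x)}"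

definition f :: "(nat \<Rightarrow> real) \<Rightarrow> real" where
  "f x = (\<Sum>k. (real (Suc k))\<^sup>2 / 2 * (x k - 1 / (real (Suc k))\<^sup>2)\<^sup>2)"

definition A :: "(nat \<Rightarrow> real) \<Rightarrow> (nat \<Rightarrow> real)" where
  "A x = (\<lambda>k. if k = 0 then x 0 else x k - x (k - 1))"

definition adjoint_cc :: "((nat \<Rightarrow> real) \<Rightarrow> (nat \<Rightarrow> real)) \<Rightarrow> (nat \<Rightarrow> real) \<Rightarrow> (nat \<Rightarrow> real)" where
  "adjoint_cc T z = (THE w. w \<in> l2 \<and> (\<forall>x \<in> cc. pair w x = pair z (T x)))"

end

theory Submission
  imports Defs
begin

text \<open>Writing \<open>c\<^sub>k = (k+1)\<^sup>2\<close>, one has \<open>c\<^sub>k/2\<cdot>(x\<^sub>k - 1/c\<^sub>k)\<^sup>2 = 1/(2c\<^sub>k) + c\<^sub>k/2\<cdot>x\<^sub>k\<^sup>2 - x\<^sub>k\<close>, so on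
  finitely supported \<open>x\<close> the value \<open>f x\<close> is \<open>f 0\<close> plus a positive definite quadratic form minus the
  linear form \<open>\<Sum> x\<^sub>k\<close>. Testing a subgradient \<open>z\<close> of \<open>f\<close> at \<open>0\<close> along the \<open>k\<close>-th coordinate axis forces
  \<open>z\<^sub>k = -1\<close> for every \<open>k\<close>, which is not square summable; hence \<open>\<partial>f(0) = \<emptyset>\<close>. For \<open>f \<circ> A\<close> the
  linear form becomes \<open>\<Sum> (Ay)\<^sub>k\<close>, which telescopes to \<open>0\<close> on finitely supported \<open>y\<close>: so \<open>0\<close> minimises
  \<open>f \<circ> A\<close>, and the same coordinate test shows that \<open>0\<close> is its only subgradient.\<close>

lemma le_quadratic_imp_zero:
  fixes a C :: real
  assumes "C \<ge> 0" and "\<And>t. t * a \<le> t\<^sup>2 * C"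
  shows "a = 0"
proof -
  define s where "s = 2 * C + 1"
  have s: "s > 0" using assms(1) by (simp add: s_def)
  have "a / s * a \<le> (a / s)\<^sup>2 * C" by (rule assms(2))
  then have "a\<^sup>2 * s \<le> a\<^sup>2 * C"
    using s by (simp add: power2_eq_square field_simps)
  then have "a\<^sup>2 * (C + 1) \<le> 0" by (simp add: s_def algebra_simps)
  then show ?thesis
    using assms(1) by (simp add: mult_le_0_iff add_nonneg_pos)
qed

definition scaled_unit :: "nat \<Rightarrow> real \<Rightarrow> nat \<Rightarrow> real" where
  "scaled_unit k t = (\<lambda>j. if j = k then t else 0)"

lemma scaled_unit_in_cc: "scaled_unit k t \<in> cc"
  unfolding cc_def scaled_unit_def by (auto intro: finite_subset[of _ "{k}"])

lemma zero_in_cc: "(0 :: nat \<Rightarrow> real) \<in> cc"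
  by (simp add: cc_def)

lemma cc_add: "x \<in> cc \<Longrightarrow> y \<in> cc \<Longrightarrow> x + y \<in> cc"
  unfolding cc_def by (auto intro: finite_subset[of _ "{n. x n \<noteq> 0} \<union> {n. y n \<noteq> 0}"])

lemma cc_eventually_zero:
  assumes "x \<in> cc"
  obtains N where "\<And>k. k \<ge> N \<Longrightarrow> x k = 0"
proof -
  have "finite {n. x n \<noteq> 0}" using assms by (simp add: cc_def)
  then obtain N where "\<forall>n\<in>{n. x n \<noteq> 0}. n < N"
    by (meson finite_nat_set_iff_bounded)
  then show ?thesis using that by (meson leD mem_Collect_eq)
qed

lemma pair_finite_support:
  assumes "finite S" and "\<And>k. k \<notin> S \<Longrightarrow> y k = 0"
  shows "pair z y = (\<Sum>k\<in>S. z k * y k)"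
  unfolding pair_def by (rule suminf_finite[OF assms(1)]) (use assms(2) in auto)

lemma pair_scaled_unit: "pair z (scaled_unit k t) = z k * t"
  by (subst pair_finite_support[of "{k}"]) (auto simp: scaled_unit_def)

lemma subdiff_coordinate_test:
  assumes "z \<in> subdiff h x" and "x \<in> cc"
  shows "h x + z k * t \<le> h (x + scaled_unit k t)"
proof -
  have "x + scaled_unit k t \<in> cc" using assms(2) scaled_unit_in_cc by (rule cc_add)
  then show ?thesis
    using assms(1) by (auto simp: subdiff_def pair_scaled_unit)
qed

lemma f_term_split:
  fixes a c :: real
  assumes "c \<noteq> 0"
  shows "c / 2 * (a - 1 / c)\<^sup>2 = c / 2 * (0 - 1 / c)\<^sup>2 + (c / 2 * a\<^sup>2 - a)"
  using assms by (simp add: power2_eq_square field_simps)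

lemma summable_f_terms_at_zero:
  "summable (\<lambda>k. (real (Suc k))\<^sup>2 / 2 * (0 - 1 / (real (Suc k))\<^sup>2)\<^sup>2)"
proof -
  have term_eq: "c / 2 * (0 - 1 / c)\<^sup>2 = 1 / 2 * (1 / c)" if "c \<noteq> 0" for c :: real
    using that by (simp add: power2_eq_square)
  have "summable (\<lambda>k. 1 / (real k + 1)\<^sup>2)"
    using inverse_squares_sums by (simp add: sums_iff add.commute)
  then have "summable (\<lambda>k. 1 / 2 * (1 / (real (Suc k))\<^sup>2))"
    by (intro summable_mult) (simp add: add.commute)
  then show ?thesis
    by (subst term_eq) simp_all
qed

lemma f_finite_support:
  assumes "finite S" and "\<And>k. k \<notin> S \<Longrightarrow> x k = 0"
  shows "f x = f 0 + (\<Sum>k\<in>S. (real (Suc k))\<^sup>2 / 2 * (x k)\<^sup>2 - x k)"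
proof -
  define q where "q k = (real (Suc k))\<^sup>2 / 2 * (x k)\<^sup>2 - x k" for k
  have q_out: "q k = 0" if "k \<notin> S" for k
    using assms(2)[OF that] by (simp add: q_def)
  have "f x = (\<Sum>k. (real (Suc k))\<^sup>2 / 2 * (0 - 1 / (real (Suc k))\<^sup>2)\<^sup>2 + q k)"
    unfolding f_def q_def by (subst f_term_split) simp_all
  also have "\<dots> = f 0 + (\<Sum>k. q k)"
  proof -
    have "summable q" by (rule summable_finite[OF assms(1)]) (use q_out in auto)
    moreover have "f 0 = (\<Sum>k. (real (Suc k))\<^sup>2 / 2 * (0 - 1 / (real (Suc k))\<^sup>2)\<^sup>2)"
      by (simp add: f_def)
    ultimately show ?thesis
      using suminf_add[OF summable_f_terms_at_zero] by presburger
  qed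
  also have "(\<Sum>k. q k) = (\<Sum>k\<in>S. q k)"
    by (rule suminf_finite[OF assms(1)]) (use q_out in auto)
  finally show ?thesis unfolding q_def .
qed

lemma A_zero: "A 0 = 0"
  by (auto simp: A_def)

lemma sum_A_telescope: "(\<Sum>k<Suc n. A y k) = y n"
  by (induction n) (auto simp: A_def)

lemma A_scaled_unit: "A (scaled_unit k t) j = (if j = k then t else if j = Suc k then - t else 0)"
  by (cases j) (auto simp: A_def scaled_unit_def)

lemma f_comp_A_ge:
  assumes "y \<in> cc"
  shows "f (A y) \<ge> f 0"
proof -
  obtain N where N: "\<And>k. k \<ge> N \<Longrightarrow> y k = 0"
    using cc_eventually_zero[OF assms] by blast
  have A_out: "A y k = 0" if "k \<notin> {..<Suc N}" for k
    using that N by (simp add: A_def)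
  have "f (A y) = f 0 + (\<Sum>k<Suc N. (real (Suc k))\<^sup>2 / 2 * (A y k)\<^sup>2 - A y k)"
    by (rule f_finite_support) (use A_out in auto)
  also have "\<dots> = f 0 + (\<Sum>k<Suc N. (real (Suc k))\<^sup>2 / 2 * (A y k)\<^sup>2) - y N"
    by (simp only: sum_subtractf sum_A_telescope add_diff_eq)
  also have "\<dots> \<ge> f 0"
    using N by (simp add: sum_nonneg)
  finally show ?thesis .
qed

lemma subdiff_f_comp_A: "subdiff (f \<circ> A) 0 = {0}"
proof
  show "{0} \<subseteq> subdiff (f \<circ> A) 0"
    using f_comp_A_ge by (simp add: subdiff_def l2_def pair_def A_zero)
  show "subdiff (f \<circ> A) 0 \<subseteq> {0}"
  proof
    fix z assume z: "z \<in> subdiff (f \<circ> A) 0"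
    have "z k = 0" for k
    proof (rule le_quadratic_imp_zero)
      let ?C = "((real (Suc k))\<^sup>2 + (real (Suc (Suc k)))\<^sup>2) / 2"
      show "?C \<ge> 0" by simp
      fix t
      have "f (A (scaled_unit k t)) = f 0 + t\<^sup>2 * ?C"
        by (subst f_finite_support[of "{k, Suc k}"])
          (auto simp: A_scaled_unit power2_eq_square field_simps)
      then show "t * z k \<le> t\<^sup>2 * ?C"
        using subdiff_coordinate_test[OF z zero_in_cc, of k t] by (simp add: A_zero mult.commute)
    qed
    then show "z \<in> {0}" by auto
  qed
qed

lemma subdiff_f_zero_empty: "subdiff f 0 = {}"
proof (rule equals0I)
  fix z assume z: "z \<in> subdiff f 0"
  have "z k + 1 = 0" for k
  proof (rule le_quadratic_imp_zero)
    let ?C = "(real (Suc k))\<^sup>2 / 2"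
    show "?C \<ge> 0" by simp
    fix t
    have "f (scaled_unit k t) = f 0 + (t\<^sup>2 * ?C - t)"
      by (subst f_finite_support[of "{k}"]) (auto simp: scaled_unit_def)
    then show "t * (z k + 1) \<le> t\<^sup>2 * ?C"
      using subdiff_coordinate_test[OF z zero_in_cc, of k t] by (simp add: algebra_simps)
  qed
  then have "(z k)\<^sup>2 = 1" for k by (metis add_eq_0_iff power2_minus one_power2)
  moreover have "summable (\<lambda>k. (z k)\<^sup>2)" using z by (simp add: subdiff_def l2_def)
  ultimately have "(\<lambda>k. 1 :: real) \<longlonglongrightarrow> 0" by (simp add: summable_LIMSEQ_zero)
  then show False by (simp add: LIMSEQ_const_iff)
qed

theorem mainTheorem11:
  shows "subdiff (f \<circ> A) 0 = {0} \<and> {0::nat \<Rightarrow> real} \<noteq> {}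
         \<and> adjoint_cc A ` subdiff f (A 0) = {}"
  using subdiff_f_comp_A subdiff_f_zero_empty by (simp add: A_zero)

end
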